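(* For all integers $t\ge0$ and $k\ge1$, \[m(2^{k+2}t+2^{k+1}-2)\ge m(t)+\frac{k}{2^k}.\]
   Context: $s(n)$ is the number of $1$s in the binary expansion of $n\ge0$; $\delta(j,t)=\lim_{N\to\infty}\frac1N|\{0\le n<N: s(n+t)-s(n)=j\}|$ for $j\in\mathbb Z$, a probability distribution on $\mathbb Z$, and $\kappa_j(t)$ denotes its $j$-th cumulant ($\log\sum_k\delta(k,t)e^{2\pi ik\vartheta}=\sum_{j\ge0}\frac{\kappa_j(t)}{j!}(2\pi i\vartheta)^j$ near $\vartheta=0$). Set $D(t)=\kappa_2(t)-\kappa_3(t)/3$ and $m(t)=\min\bigl(D(t),D(t+1)\bigr)$. *)

theory Defs
  imports "HOL-Analysis.Analysis"
begin

fun bsum :: "nat \<Rightarrow> nat" where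
  "bsum n = (if n = 0 then 0 else n mod 2 + bsum (n div 2))"

definition delta :: "int \<Rightarrow> nat \<Rightarrow> real" where
  "delta j t = lim (\<lambda>N. real (card {n. n < N \<and> int (bsum (n + t)) - int (bsum n) = j}) / real N)"

text \<open>Cumulants: log (sum_k delta(k,t) e^{k z}) = sum_j kappa_j(t)/j! z^j near z = 0
  (the paper's expansion with z = 2 pi i theta), so kappa_j(t) is the j-th derivative
  at 0 of the cumulant generating function.\<close>
definition cgf :: "nat \<Rightarrow> complex \<Rightarrow> complex" where
  "cgf t z = Ln (\<Sum>\<^sub>\<infinity>k\<in>(UNIV::int set). complex_of_real (delta k t) * exp (of_int k * z))"

definition kappa :: "nat \<Rightarrow> nat \<Rightarrow> real" where
  "kappa j t = Re ((deriv ^^ j) (cgf t) 0)"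

definition D :: "nat \<Rightarrow> real" where
  "D t = kappa 2 t - kappa 3 t / 3"

definition m :: "nat \<Rightarrow> real" where
  "m t = min (D t) (D (t + 1))"

end

theory Submission
  imports Defs "HOL-Complex_Analysis.Complex_Analysis"
begin

text \<open>
  Splitting \<open>n\<close> by parity gives \<open>delta j (2 * t) = delta j t\<close> and
  \<open>delta j (2 * t + 1) = (delta (j - 1) t + delta (j + 1) (t + 1)) / 2\<close>, with
  \<open>delta j 0 = [j = 0]\<close> and \<open>delta (1 - n) 1 = 2 ^ -(n + 1)\<close>. Hence the moment generating
  function \<open>G t z = \<Sum>j. delta j t * exp (j * z)\<close> satisfies \<open>G (2 * t) = G t\<close> and
  \<open>G (2 * t + 1) = (exp z * G t + exp (- z) * G (t + 1)) / 2\<close> near \<open>0\<close>. As \<open>G t 0 = 1\<close>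
  and \<open>G' t 0 = 0\<close>, the second and third cumulants are the second and third derivatives of
  \<open>G t\<close> at \<open>0\<close>, and they obey linear recursions, e.g.
  \<open>kappa 2 (2 * t + 1) = (kappa 2 t + kappa 2 (t + 1)) / 2 + 1\<close>; in particular
  \<open>s = (kappa 2 t - kappa 2 (t + 1)) / 2 \<le> 1\<close>.

  Let \<open>x i = 2 ^ i * (2 * t + 1) - 1\<close> (the binary digits of \<open>t\<close>, then a 0, then \<open>i\<close> ones),
  so that \<open>x (i + 1) = 2 * x i + 1\<close> and \<open>x i + 1\<close> has the same cumulants as \<open>2 * t + 1\<close>.
  Solving the recursions along this chain gives, with \<open>u = 2 ^ -i\<close>,
  \<open>D (x i) = (1 - u) * D (2 * t + 1) + u * D t + i * u * (3 - s)\<close> and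
  \<open>D (2 * t + 1) = (D t + D (t + 1)) / 2 + 1 - s\<close>, whence \<open>D (x i) \<ge> m t + 2 * i / 2 ^ i\<close>.
  The theorem follows because \<open>2 ^ (k + 2) * t + 2 ^ (k + 1) - 2 = 2 * x k\<close> and its
  successor is \<open>x (k + 1)\<close>.
\<close>

section \<open>Splitting into even and odd indices\<close>

lemma nat_bit_pair_induct [case_names zero one even odd]:
  "P n" if zero: "P 0" and one: "P 1"
    and even: "\<And>n. P n \<Longrightarrow> 0 < n \<Longrightarrow> P (2 * n)"
    and odd: "\<And>n. P n \<Longrightarrow> P (Suc n) \<Longrightarrow> 0 < n \<Longrightarrow> P (Suc (2 * n))"
proof (induction n rule: less_induct)
  case (less n)
  consider "n = 0" | "n = 1" | k where "n = 2 * k" "0 < k" | k where "n = Suc (2 * k)" "0 < k"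
  proof -
    have "n = 0 \<or> n = 1 \<or> (\<exists>k. n = 2 * k \<and> 0 < k) \<or> (\<exists>k. n = Suc (2 * k) \<and> 0 < k)"
      by presburger
    then show ?thesis
      using that by blast
  qed
  then show ?case
    by cases (use zero one less in \<open>auto intro!: even odd\<close>)
qed

lemma eventually_sequentially_even_odd:
  assumes "eventually (\<lambda>n. P (2 * n)) sequentially" "eventually (\<lambda>n. P (Suc (2 * n))) sequentially"
  shows "eventually P sequentially"
proof -
  obtain a b where "\<And>n. n \<ge> a \<Longrightarrow> P (2 * n)" "\<And>n. n \<ge> b \<Longrightarrow> P (Suc (2 * n))"
    using assms by (auto simp: eventually_sequentially)
  then have "P n" if "n \<ge> 2 * a + 2 * b + 1" for n
    using that by (cases "even n") (auto elim!: evenE oddE)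
  then show ?thesis
    by (auto simp: eventually_sequentially)
qed

lemma LIMSEQ_even_odd:
  assumes "(\<lambda>n. X (2 * n)) \<longlonglongrightarrow> L" "(\<lambda>n. X (Suc (2 * n))) \<longlonglongrightarrow> L"
  shows "X \<longlonglongrightarrow> L"
  using assms by (auto simp: tendsto_def intro: eventually_sequentially_even_odd)

lemma LIMSEQ_inverse_odd: "(\<lambda>n. inverse (real (Suc (2 * n)))) \<longlonglongrightarrow> 0"
  using LIMSEQ_subseq_LIMSEQ[OF LIMSEQ_inverse_real_of_nat, of "(*) 2"]
  by (simp add: strict_mono_def o_def)

lemma LIMSEQ_ratio_of_mono_double:
  fixes c :: "nat \<Rightarrow> nat"
  assumes "mono c" and lim: "(\<lambda>n. real (c (2 * n)) / real n) \<longlonglongrightarrow> a"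
  shows "(\<lambda>n. real (c n) / real n) \<longlonglongrightarrow> a / 2"
proof (rule LIMSEQ_even_odd)
  show "(\<lambda>n. real (c (2 * n)) / real (2 * n)) \<longlonglongrightarrow> a / 2"
    using tendsto_divide[OF lim tendsto_const[of 2]] by (simp add: mult.commute)
  have "(\<lambda>n. real n / real (Suc (2 * n))) = (\<lambda>n. (1 - inverse (real (Suc (2 * n)))) / 2)"
    by (intro ext) (simp add: field_simps)
  then have "(\<lambda>n. real n / real (Suc (2 * n))) \<longlonglongrightarrow> 1 / 2"
    using tendsto_divide[OF tendsto_diff[OF tendsto_const LIMSEQ_inverse_odd] tendsto_const[of 2], of 1]
    by simp
  from tendsto_mult[OF lim this]
  have "(\<lambda>n. real (c (2 * n)) / real n * (real n / real (Suc (2 * n)))) \<longlonglongrightarrow> a / 2"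
    by simp
  moreover have "eventually (\<lambda>n. real (c (2 * n)) / real n * (real n / real (Suc (2 * n)))
      = real (c (2 * n)) / real (Suc (2 * n))) sequentially"
    using eventually_gt_at_top[of 0] by eventually_elim simp
  ultimately have lower: "(\<lambda>n. real (c (2 * n)) / real (Suc (2 * n))) \<longlonglongrightarrow> a / 2"
    by (rule Lim_transform_eventually)
  have "(\<lambda>n. real (Suc n) / real (Suc (2 * n))) = (\<lambda>n. (1 + inverse (real (Suc (2 * n)))) / 2)"
    by (intro ext) (simp add: field_simps)
  then have "(\<lambda>n. real (Suc n) / real (Suc (2 * n))) \<longlonglongrightarrow> 1 / 2"
    using tendsto_divide[OF tendsto_add[OF tendsto_const LIMSEQ_inverse_odd] tendsto_const[of 2], of 1]
    by simp
  from tendsto_mult[OF LIMSEQ_Suc[OF lim] this]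
  have upper: "(\<lambda>n. real (c (2 * Suc n)) / real (Suc (2 * n))) \<longlonglongrightarrow> a / 2"
    by (simp del: of_nat_Suc)
  show "(\<lambda>n. real (c (Suc (2 * n))) / real (Suc (2 * n))) \<longlonglongrightarrow> a / 2"
  proof (rule tendsto_sandwich[OF _ _ lower upper]; intro always_eventually allI divide_right_mono)
    show "real (c (2 * n)) \<le> real (c (Suc (2 * n)))" "real (c (Suc (2 * n))) \<le> real (c (2 * Suc n))" for n
      using \<open>mono c\<close> by (simp_all add: monoD)
  qed simp_all
qed

lemma card_less_double:
  "card {n. n < 2 * M \<and> P n} = card {i. i < M \<and> P (2 * i)} + card {i. i < M \<and> P (Suc (2 * i))}"
proof -
  have split: "{n. n < 2 * M \<and> P n}
      = (*) 2 ` {i. i < M \<and> P (2 * i)} \<union> (\<lambda>i. Suc (2 * i)) ` {i. i < M \<and> P (Suc (2 * i))}"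
  proof (intro set_eqI iffI)
    fix n assume n: "n \<in> {n. n < 2 * M \<and> P n}"
    show "n \<in> (*) 2 ` {i. i < M \<and> P (2 * i)} \<union> (\<lambda>i. Suc (2 * i)) ` {i. i < M \<and> P (Suc (2 * i))}"
    proof (cases "even n")
      case True
      then obtain i where "n = 2 * i" ..
      with n show ?thesis by auto
    next
      case False
      then obtain i where "n = Suc (2 * i)"
        by (metis oddE Suc_eq_plus1)
      with n show ?thesis by auto
    qed
  qed auto
  have "2 * a \<noteq> Suc (2 * b)" for a b :: nat
    by presburger
  then show ?thesis
    unfolding split by (subst card_Un_disjoint) (auto simp: card_image inj_on_def)
qed

section \<open>Higher derivatives\<close>

lemma higher_deriv_Ln_comp:
  assumes F: "F holomorphic_on S" "open S" and a: "a \<in> S" "F a \<notin> \<real>\<^sub>\<le>\<^sub>0"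
  shows "(deriv ^^ Suc n) (\<lambda>z. Ln (F z)) a = (deriv ^^ n) (\<lambda>z. deriv F z / F z) a"
proof -
  define T where "T = S \<inter> F -` (- \<real>\<^sub>\<le>\<^sub>0)"
  have T: "open T" "a \<in> T" "T \<subseteq> S"
    using F a holomorphic_on_imp_continuous_on
    by (auto simp: T_def intro!: continuous_open_preimage)
  have slit: "F z \<notin> \<real>\<^sub>\<le>\<^sub>0" "F z \<noteq> 0" if "z \<in> T" for z
    using that by (auto simp: T_def)
  have holo_T: "F holomorphic_on T"
    using F(1) T(3) by (rule holomorphic_on_subset)
  have "deriv (\<lambda>z. Ln (F z)) z = deriv F z / F z" if "z \<in> T" for z
  proof (rule DERIV_imp_deriv)
    have "(F has_field_derivative deriv F z) (at z)"
      using holo_T T(1) that by (auto intro: holomorphic_derivI)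
    then show "((\<lambda>z. Ln (F z)) has_field_derivative deriv F z / F z) (at z)"
      using slit[OF that] by (auto intro!: derivative_eq_intros simp: field_simps)
  qed
  moreover have "(\<lambda>z. Ln (F z)) holomorphic_on T" "(\<lambda>z. deriv F z / F z) holomorphic_on T"
    using holo_T T(1) slit by (auto intro!: holomorphic_intros)
  ultimately have "(deriv ^^ n) (deriv (\<lambda>z. Ln (F z))) a = (deriv ^^ n) (\<lambda>z. deriv F z / F z) a"
    using T by (intro higher_deriv_transform_within_open[of _ T]) (auto intro: holomorphic_deriv)
  then show ?thesis
    by (simp add: funpow_Suc_right del: funpow.simps)
qed

lemma higher_deriv_Ln_comp_2_3:
  assumes F: "F holomorphic_on S" "open S" and a: "a \<in> S" "F a = 1" "deriv F a = 0"
  shows "(deriv ^^ 2) (\<lambda>z. Ln (F z)) a = (deriv ^^ 2) F a"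
    and "(deriv ^^ 3) (\<lambda>z. Ln (F z)) a = (deriv ^^ 3) F a"
proof -
  define T where "T = S \<inter> F -` (- {0})"
  have T: "open T" "a \<in> T" "T \<subseteq> S"
    using F a holomorphic_on_imp_continuous_on
    by (auto simp: T_def intro!: continuous_open_preimage)
  define g where "g = (\<lambda>z. deriv F z / F z)"
  have holo: "F holomorphic_on T" "g holomorphic_on T"
    using holomorphic_on_subset[OF F(1) T(3)] T(1) by (auto simp: g_def T_def intro!: holomorphic_intros)
  \<comment> \<open>Leibniz' rule for \<open>g * F = deriv F\<close>, where \<open>g = deriv (\<lambda>z. Ln (F z))\<close> near \<open>a\<close>\<close>
  have product: "(deriv ^^ n) (\<lambda>z. g z * F z) a = (deriv ^^ n) (deriv F) a" for n
  proof (rule higher_deriv_transform_within_open[OF _ _ T(1,2)])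
    show "(\<lambda>z. g z * F z) holomorphic_on T"
      using holo by (intro holomorphic_intros)
    show "deriv F holomorphic_on T"
      using holo(1) T(1) by (rule holomorphic_deriv)
    show "g z * F z = deriv F z" if "z \<in> T" for z
      using that by (simp add: g_def T_def)
  qed
  have Leibniz: "(\<Sum>i = 0..n. of_nat (n choose i) * (deriv ^^ i) g a * (deriv ^^ (n - i)) F a)
      = (deriv ^^ Suc n) F a" for n
    using higher_deriv_mult[OF holo(2,1) T(1,2), of n] product[of n]
    by (simp add: funpow_Suc_right del: funpow.simps)
  have "g a = 0"
    using a by (simp add: g_def)
  from Leibniz[of 1] Leibniz[of 2] this a
  have "(deriv ^^ 1) g a = (deriv ^^ 2) F a" "(deriv ^^ 2) g a = (deriv ^^ 3) F a"
    by (simp_all add: numeral_eq_Suc)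
  moreover have "F a \<notin> \<real>\<^sub>\<le>\<^sub>0"
    using a by simp
  ultimately show "(deriv ^^ 2) (\<lambda>z. Ln (F z)) a = (deriv ^^ 2) F a"
    and "(deriv ^^ 3) (\<lambda>z. Ln (F z)) a = (deriv ^^ 3) F a"
    using higher_deriv_Ln_comp[OF F a(1), of 1] higher_deriv_Ln_comp[OF F a(1), of 2]
    by (simp_all add: g_def numeral_eq_Suc)
qed

lemma higher_deriv_cmult_exp:
  "(deriv ^^ n) (\<lambda>z. b * exp (c * z)) = (\<lambda>z::complex. b * c ^ n * exp (c * z))"
proof (induction n)
  case (Suc n)
  have "deriv (\<lambda>z. b * c ^ n * exp (c * z)) = (\<lambda>z. b * c ^ Suc n * exp (c * z))"
    by (rule ext, rule DERIV_imp_deriv) (auto intro!: derivative_eq_intros)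
  with Suc show ?case
    by simp
qed simp

section \<open>The densities \<open>delta\<close>\<close>

declare bsum.simps [simp del]

lemma bsum_0 [simp]: "bsum 0 = 0"
  by (simp add: bsum.simps)

lemma bsum_double [simp]: "bsum (2 * n) = bsum n"
  by (cases "n = 0") (simp_all add: bsum.simps[of "2 * n"])

lemma bsum_Suc_double [simp]: "bsum (Suc (2 * n)) = Suc (bsum n)"
  by (simp add: bsum.simps[of "Suc (2 * n)"])

lemma bsum_Suc_le: "bsum (Suc n) \<le> Suc (bsum n)"
proof (induction n rule: nat_bit_induct)
  case (odd n)
  have "bsum (Suc (Suc (2 * n))) = bsum (Suc n)"
    using bsum_double[of "Suc n"] by (simp del: bsum_double)
  with odd show ?case
    by simp
qed (use bsum_Suc_double[of 0] in simp_all)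

definition digit_diff_count :: "int \<Rightarrow> nat \<Rightarrow> nat \<Rightarrow> nat" where
  "digit_diff_count j t N = card {n. n < N \<and> int (bsum (n + t)) - int (bsum n) = j}"

definition digit_diff_freq :: "int \<Rightarrow> nat \<Rightarrow> nat \<Rightarrow> real" where
  "digit_diff_freq j t N = real (digit_diff_count j t N) / real N"

lemma mono_digit_diff_count: "mono (digit_diff_count j t)"
  by (auto simp: mono_def digit_diff_count_def intro!: card_mono)

lemma digit_diff_count_double: "digit_diff_count j (2 * t) (2 * M) = 2 * digit_diff_count j t M"
proof -
  have "2 * i + 2 * t = 2 * (i + t)" "Suc (2 * i) + 2 * t = Suc (2 * (i + t))" for i
    by simp_all
  then show ?thesis
    unfolding digit_diff_count_def card_less_double by (simp only: bsum_double bsum_Suc_double) simp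
qed

lemma digit_diff_count_Suc_double:
  "digit_diff_count j (Suc (2 * t)) (2 * M) = digit_diff_count (j - 1) t M + digit_diff_count (j + 1) (Suc t) M"
proof -
  have "2 * i + Suc (2 * t) = Suc (2 * (i + t))" "Suc (2 * i) + Suc (2 * t) = 2 * (i + Suc t)" for i
    by simp_all
  then show ?thesis
    unfolding digit_diff_count_def card_less_double
    by (simp only: bsum_double bsum_Suc_double) (simp add: algebra_simps)
qed

lemma digit_diff_count_0: "digit_diff_count j 0 N = (if j = 0 then N else 0)"
  by (simp add: digit_diff_count_def)

lemma digit_diff_count_1_ge_2:
  assumes "j \<ge> 2"
  shows "digit_diff_count j 1 N = 0"
proof -
  have "int (bsum (n + 1)) - int (bsum n) < j" for n
    using bsum_Suc_le[of n] assms by simp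
  then have "{n. n < N \<and> int (bsum (n + 1)) - int (bsum n) = j} = {}"
    by fastforce
  then show ?thesis
    by (simp add: digit_diff_count_def)
qed

lemma digit_diff_freq_double:
  assumes "digit_diff_freq j t \<longlonglongrightarrow> L"
  shows "digit_diff_freq j (2 * t) \<longlonglongrightarrow> L"
proof -
  have "(\<lambda>M. real (digit_diff_count j (2 * t) (2 * M)) / real M) \<longlonglongrightarrow> 2 * L"
    using tendsto_mult_left[OF assms, of 2] by (simp add: digit_diff_freq_def digit_diff_count_double)
  from LIMSEQ_ratio_of_mono_double[OF mono_digit_diff_count this] show ?thesis
    by (simp add: digit_diff_freq_def[abs_def])
qed

lemma digit_diff_freq_Suc_double:
  assumes "digit_diff_freq (j - 1) t \<longlonglongrightarrow> A" "digit_diff_freq (j + 1) (Suc t) \<longlonglongrightarrow> B"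
  shows "digit_diff_freq j (Suc (2 * t)) \<longlonglongrightarrow> (A + B) / 2"
proof -
  have "(\<lambda>M. real (digit_diff_count j (Suc (2 * t)) (2 * M)) / real M) \<longlonglongrightarrow> A + B"
    using tendsto_add[OF assms]
    by (simp add: digit_diff_freq_def digit_diff_count_Suc_double add_divide_distrib)
  from LIMSEQ_ratio_of_mono_double[OF mono_digit_diff_count this] show ?thesis
    by (simp add: digit_diff_freq_def[abs_def])
qed

lemma digit_diff_freq_0: "digit_diff_freq j 0 \<longlonglongrightarrow> of_bool (j = 0)"
proof -
  have "eventually (\<lambda>N. of_bool (j = 0) = digit_diff_freq j 0 N) sequentially"
    using eventually_gt_at_top[of 0]
    by eventually_elim (simp add: digit_diff_freq_def digit_diff_count_0)
  then show ?thesis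
    by (rule Lim_transform_eventually[OF tendsto_const])
qed

lemma digit_diff_freq_1_ge_2:
  assumes "j \<ge> 2"
  shows "digit_diff_freq j 1 \<longlonglongrightarrow> 0"
proof -
  have "digit_diff_freq j 1 = (\<lambda>_. 0)"
    using digit_diff_count_1_ge_2[OF assms] by (simp add: fun_eq_iff digit_diff_freq_def)
  then show ?thesis
    by simp
qed

lemma digit_diff_freq_1_le_1: "digit_diff_freq (1 - int n) 1 \<longlonglongrightarrow> 1 / 2 ^ Suc n"
proof (induction n)
  case 0
  have "digit_diff_freq 1 (Suc (2 * 0)) \<longlonglongrightarrow> (1 + 0) / 2"
    by (rule digit_diff_freq_Suc_double)
       (use digit_diff_freq_0[of 0] digit_diff_freq_1_ge_2[of 2] in simp_all)
  then show ?case
    by simp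
next
  case (Suc n)
  have "digit_diff_freq (- int n) (Suc (2 * 0)) \<longlonglongrightarrow> (0 + 1 / 2 ^ Suc n) / 2"
    by (rule digit_diff_freq_Suc_double) (use digit_diff_freq_0[of "- int n - 1"] Suc in simp_all)
  then show ?case
    by simp
qed

lemma convergent_digit_diff_freq: "convergent (digit_diff_freq j t)"
proof (induction t arbitrary: j rule: nat_bit_pair_induct)
  case zero
  show ?case
    using digit_diff_freq_0 by (rule convergentI)
next
  case one
  show ?case
  proof (cases "j \<ge> 2")
    case True
    then show ?thesis
      using digit_diff_freq_1_ge_2 by (blast intro: convergentI)
  next
    case False
    then have "j = 1 - int (nat (1 - j))"
      by simp
    then show ?thesis
      using digit_diff_freq_1_le_1 by (metis convergentI)
  qed
next
  case (even t)
  then show ?case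
    using digit_diff_freq_double unfolding convergent_def by blast
next
  case (odd t)
  then show ?case
    using digit_diff_freq_Suc_double unfolding convergent_def by blast
qed

lemma digit_diff_freq_tendsto_delta: "digit_diff_freq j t \<longlonglongrightarrow> delta j t"
  using convergent_digit_diff_freq
  by (simp add: delta_def digit_diff_freq_def[abs_def] digit_diff_count_def convergent_LIMSEQ_iff)

lemma delta_double: "delta j (2 * t) = delta j t"
  using LIMSEQ_unique[OF digit_diff_freq_tendsto_delta digit_diff_freq_double[OF digit_diff_freq_tendsto_delta]] .

lemma delta_Suc_double: "delta j (Suc (2 * t)) = (delta (j - 1) t + delta (j + 1) (Suc t)) / 2"
  using LIMSEQ_unique[OF digit_diff_freq_tendsto_delta
      digit_diff_freq_Suc_double[OF digit_diff_freq_tendsto_delta digit_diff_freq_tendsto_delta]] .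

lemma delta_0: "delta j 0 = of_bool (j = 0)"
  using LIMSEQ_unique[OF digit_diff_freq_tendsto_delta digit_diff_freq_0] .

lemma delta_1_ge_2: "j \<ge> 2 \<Longrightarrow> delta j 1 = 0"
  using LIMSEQ_unique[OF digit_diff_freq_tendsto_delta digit_diff_freq_1_ge_2] .

lemma delta_1_le_1: "delta (1 - int n) 1 = 1 / 2 ^ Suc n"
  using LIMSEQ_unique[OF digit_diff_freq_tendsto_delta digit_diff_freq_1_le_1] .

section \<open>The moment generating function\<close>

definition mgf_term :: "nat \<Rightarrow> complex \<Rightarrow> int \<Rightarrow> complex" where
  "mgf_term t z k = complex_of_real (delta k t) * exp (of_int k * z)"

definition mgf :: "nat \<Rightarrow> complex \<Rightarrow> complex" where
  "mgf t z = infsum (mgf_term t z) UNIV"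

lemma cgf_eq_Ln_mgf: "cgf t z = Ln (mgf t z)"
  by (simp add: cgf_def mgf_def mgf_term_def[abs_def])

lemma mgf_term_double: "mgf_term (2 * t) = mgf_term t"
  by (simp add: fun_eq_iff mgf_term_def delta_double)

lemma mgf_double: "mgf (2 * t) = mgf t"
  by (simp add: fun_eq_iff mgf_def mgf_term_double)

lemma has_sum_mgf_term_0: "(mgf_term 0 z has_sum 1) UNIV"
  by (rule has_sum_finite_neutralI[of "{0}"]) (auto simp: mgf_term_def delta_0)

lemma mgf_0: "mgf 0 z = 1"
  using has_sum_mgf_term_0 by (simp add: mgf_def infsumI)

lemma mgf_term_Suc_double:
  "mgf_term (Suc (2 * t)) z k = exp z / 2 * mgf_term t z (k - 1) + exp (- z) / 2 * mgf_term (Suc t) z (k + 1)"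
proof -
  have "exp (of_int k * z) = exp z * exp (of_int (k - 1) * z)"
       "exp (of_int k * z) = exp (- z) * exp (of_int (k + 1) * z)"
    by (simp_all add: exp_add[symmetric] algebra_simps)
  then show ?thesis
    unfolding mgf_term_def delta_Suc_double by (simp add: field_simps)
qed

lemma has_sum_mgf_term_Suc_double:
  assumes "(mgf_term t z has_sum A) UNIV" "(mgf_term (Suc t) z has_sum B) UNIV"
  shows "(mgf_term (Suc (2 * t)) z has_sum (exp z / 2 * A + exp (- z) / 2 * B)) UNIV"
proof -
  have "((\<lambda>k. mgf_term t z (k + c)) has_sum A) UNIV" "((\<lambda>k. mgf_term (Suc t) z (k + c)) has_sum B) UNIV"
    for c :: int
    using assms by (simp_all add: has_sum_reindex_bij_betw[OF bij_plus_right])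
  moreover have "mgf_term (Suc (2 * t)) z
      = (\<lambda>k. exp z / 2 * mgf_term t z (k + - 1) + exp (- z) / 2 * mgf_term (Suc t) z (k + 1))"
    by (simp add: fun_eq_iff mgf_term_Suc_double)
  ultimately show ?thesis
    by (simp only:) (intro has_sum_add has_sum_cmult_right)
qed

lemma norm_exp_minus_lt_2:
  assumes "z \<in> ball 0 (1 / 2)"
  shows "norm (exp (- z)) < 2"
proof -
  have "norm (exp (- z)) \<le> 1 + 2 * norm (- z)"
    using assms by (intro exp_bound_lemma) simp
  also have "\<dots> < 2"
    using assms by simp
  finally show ?thesis .
qed

text \<open>The radius \<open>1 / 2\<close> keeps \<open>exp (- z) / 2\<close> inside the unit disc, so that the geometric
  weights \<open>delta (1 - n) 1 = 2 ^ -(n + 1)\<close> are summable.\<close>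
lemma has_sum_mgf_term_1:
  assumes z: "z \<in> ball 0 (1 / 2)"
  shows "(mgf_term 1 z has_sum exp z / (2 - exp (- z))) UNIV"
proof -
  define x where "x = exp (- z) / 2"
  have x: "norm x < 1"
    using norm_exp_minus_lt_2[OF z] by (simp add: x_def norm_divide)
  have "((\<lambda>n. x ^ n) has_sum 1 / (1 - x)) UNIV"
    using x by (intro norm_summable_imp_has_sum) (simp_all add: norm_power summable_geometric geometric_sums)
  from has_sum_cmult_right[OF this, of "exp z / 2"]
  have "((\<lambda>n. exp z / 2 * x ^ n) has_sum exp z / (2 - exp (- z))) UNIV"
    by (simp add: x_def field_simps)
  moreover have "mgf_term 1 z \<circ> (\<lambda>n. 1 - int n) = (\<lambda>n. exp z / 2 * x ^ n)"
  proof
    fix n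
    have "exp (of_int (1 - int n) * z) = exp z * exp (- z) ^ n"
      by (simp add: exp_add[symmetric] exp_of_nat_mult[symmetric] algebra_simps)
    then show "(mgf_term 1 z \<circ> (\<lambda>n. 1 - int n)) n = exp z / 2 * x ^ n"
      unfolding o_def mgf_term_def delta_1_le_1 by (simp add: x_def power_divide field_simps)
  qed
  moreover have "inj (\<lambda>n. 1 - int n)"
    by (simp add: inj_on_def)
  ultimately have "(mgf_term 1 z has_sum exp z / (2 - exp (- z))) ((\<lambda>n. 1 - int n) ` UNIV)"
    by (simp only: has_sum_reindex)
  moreover have "(\<lambda>n. 1 - int n) ` UNIV = {..1}"
    by (auto simp: image_iff) presburger
  ultimately have "(mgf_term 1 z has_sum exp z / (2 - exp (- z))) {..1}"
    by simp
  then show ?thesis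
    by (rule has_sum_cong_neutral[THEN iffD1, rotated -1])
       (auto simp: mgf_term_def delta_1_ge_2 simp del: One_nat_def)
qed

lemma summable_mgf_term:
  assumes "z \<in> ball 0 (1 / 2)"
  shows "mgf_term t z summable_on UNIV"
proof (induction t rule: nat_bit_pair_induct)
  case zero
  show ?case
    using has_sum_mgf_term_0 by (rule has_sum_imp_summable)
next
  case one
  show ?case
    using has_sum_mgf_term_1[OF assms] by (rule has_sum_imp_summable)
next
  case (even t)
  then show ?case
    by (simp add: mgf_term_double)
next
  case (odd t)
  then show ?case
    using has_sum_mgf_term_Suc_double unfolding summable_on_def by blast
qed

lemma has_sum_mgf: "z \<in> ball 0 (1 / 2) \<Longrightarrow> (mgf_term t z has_sum mgf t z) UNIV"
  unfolding mgf_def using summable_mgf_term by simp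

lemma mgf_Suc_double:
  "z \<in> ball 0 (1 / 2) \<Longrightarrow> mgf (Suc (2 * t)) z = exp z / 2 * mgf t z + exp (- z) / 2 * mgf (Suc t) z"
  using has_sum_unique[OF has_sum_mgf has_sum_mgf_term_Suc_double[OF has_sum_mgf has_sum_mgf]] .

lemma mgf_1: "z \<in> ball 0 (1 / 2) \<Longrightarrow> mgf 1 z = exp z / (2 - exp (- z))"
  using has_sum_unique[OF has_sum_mgf has_sum_mgf_term_1] .

lemma holomorphic_mgf: "mgf t holomorphic_on ball 0 (1 / 2)"
proof (induction t rule: nat_bit_pair_induct)
  case zero
  show ?case
    by (simp add: mgf_0)
next
  case one
  have "2 - exp (- z) \<noteq> 0" if "z \<in> ball 0 (1 / 2)" for z
    using norm_exp_minus_lt_2[OF that] by auto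
  then have "(\<lambda>z. exp z / (2 - exp (- z))) holomorphic_on ball 0 (1 / 2)"
    by (intro holomorphic_intros) auto
  then show ?case
    by (rule holomorphic_transform) (metis mgf_1)
next
  case (even t)
  then show ?case
    by (simp add: mgf_double)
next
  case (odd t)
  then have "(\<lambda>z. exp z / 2 * mgf t z + exp (- z) / 2 * mgf (Suc t) z) holomorphic_on ball 0 (1 / 2)"
    by (intro holomorphic_intros) auto
  then show ?case
    by (rule holomorphic_transform) (simp add: mgf_Suc_double)
qed

lemma mgf_at_0: "mgf t 0 = 1"
proof (induction t rule: nat_bit_pair_induct)
  case (odd t)
  then show ?case
    by (simp add: mgf_Suc_double)
qed (use mgf_1[of 0] in \<open>simp_all add: mgf_0 mgf_double\<close>)

section \<open>Moments and cumulants\<close>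

definition moment :: "nat \<Rightarrow> nat \<Rightarrow> complex" where
  "moment n t = (deriv ^^ n) (mgf t) 0"

lemma moment_double: "moment n (2 * t) = moment n t"
  by (simp add: moment_def mgf_double)

lemma moment_0: "moment 0 t = 1"
  by (simp add: moment_def mgf_at_0)

lemma moment_of_0: "n > 0 \<Longrightarrow> moment n 0 = 0"
  by (simp add: moment_def mgf_0[abs_def])

lemma moment_Suc_double:
  "2 * moment n (Suc (2 * t)) = (\<Sum>i = 0..n. of_nat (n choose i) * moment (n - i) t)
    + (\<Sum>i = 0..n. of_nat (n choose i) * (- 1) ^ i * moment (n - i) (Suc t))"
proof -
  define B where "B = ball (0::complex) (1 / 2)"
  have B: "open B" "0 \<in> B"
    by (simp_all add: B_def)
  have holo: "(\<lambda>z. 1 / 2 * exp (c * z)) holomorphic_on B" "mgf u holomorphic_on B" for c u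
    using holomorphic_mgf by (auto simp: B_def intro!: holomorphic_intros)
  have "moment n (Suc (2 * t))
      = (deriv ^^ n) (\<lambda>z. 1 / 2 * exp (1 * z) * mgf t z + 1 / 2 * exp ((- 1) * z) * mgf (Suc t) z) 0"
    unfolding moment_def
    by (rule higher_deriv_transform_within_open[OF _ _ B])
       (use holo in \<open>auto intro!: holomorphic_intros simp: B_def mgf_Suc_double\<close>)
  also have "\<dots> = (deriv ^^ n) (\<lambda>z. 1 / 2 * exp (1 * z) * mgf t z) 0
      + (deriv ^^ n) (\<lambda>z. 1 / 2 * exp ((- 1) * z) * mgf (Suc t) z) 0"
    by (rule higher_deriv_add[OF _ _ B]) (use holo in \<open>auto intro!: holomorphic_intros\<close>)
  also have "\<dots> = ((\<Sum>i = 0..n. of_nat (n choose i) * moment (n - i) t)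
    + (\<Sum>i = 0..n. of_nat (n choose i) * (- 1) ^ i * moment (n - i) (Suc t))) / 2"
    unfolding higher_deriv_mult[OF holo B] higher_deriv_cmult_exp moment_def
    by (simp add: sum_divide_distrib mult_ac add_divide_distrib)
  finally show ?thesis
    by (simp add: mult.commute)
qed

lemma moment_1: "moment 1 t = 0"
proof (induction t rule: nat_bit_pair_induct)
  case zero
  show ?case
    by (simp add: moment_of_0)
next
  case one
  have "2 * moment 1 1 = (moment 1 0 + moment 0 0) + (moment 1 1 - moment 0 1)"
    using moment_Suc_double[of 1 0] by simp
  then show ?case
    by (simp add: moment_0 moment_of_0)
next
  case (even t)
  then show ?case
    by (simp add: moment_double)
next
  case (odd t)
  then show ?case
    using moment_Suc_double[of 1 t] by (simp add: moment_0)
qed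

lemma moment_2_Suc_double: "2 * moment 2 (Suc (2 * t)) = moment 2 t + moment 2 (Suc t) + 2"
  using moment_Suc_double[of 2 t] moment_1 by (simp add: numeral_2_eq_2 moment_0)

lemma moment_3_Suc_double:
  "2 * moment 3 (Suc (2 * t)) = moment 3 t + moment 3 (Suc t) + 3 * (moment 2 t - moment 2 (Suc t))"
  using moment_Suc_double[of 3 t] moment_1 by (simp add: numeral_3_eq_3 numeral_2_eq_2 moment_0 algebra_simps)

lemma kappa_eq_moment: "kappa 2 t = Re (moment 2 t)" "kappa 3 t = Re (moment 3 t)"
proof -
  have "deriv (mgf t) 0 = 0"
    using moment_1[of t] by (simp add: moment_def)
  note Ln_mgf =
    higher_deriv_Ln_comp_2_3[OF holomorphic_mgf open_ball centre_in_ball[THEN iffD2] mgf_at_0 this]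
  have "cgf t = (\<lambda>z. Ln (mgf t z))"
    by (simp add: fun_eq_iff cgf_eq_Ln_mgf)
  then show "kappa 2 t = Re (moment 2 t)" "kappa 3 t = Re (moment 3 t)"
    by (simp_all add: kappa_def moment_def Ln_mgf)
qed

lemma kappa_double: "kappa j (2 * t) = kappa j t"
proof -
  have "cgf (2 * t) = cgf t"
    by (simp add: fun_eq_iff cgf_def delta_double)
  then show ?thesis
    by (simp add: kappa_def)
qed

lemma D_double: "D (2 * t) = D t"
  by (simp add: D_def kappa_double)

lemma kappa_pow2_mult: "kappa j (2 ^ i * t) = kappa j t"
  by (induction i) (simp_all add: mult.assoc kappa_double)

lemma D_pow2_mult: "D (2 ^ i * t) = D t"
  by (simp add: D_def kappa_pow2_mult)

lemma kappa_2_Suc_double: "kappa 2 (Suc (2 * t)) = (kappa 2 t + kappa 2 (Suc t)) / 2 + 1"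
proof -
  have "2 * kappa 2 (Suc (2 * t)) = kappa 2 t + kappa 2 (Suc t) + 2"
    using arg_cong[OF moment_2_Suc_double, of Re] by (simp add: kappa_eq_moment)
  then show ?thesis
    by argo
qed

lemma kappa_3_Suc_double:
  "kappa 3 (Suc (2 * t)) = (kappa 3 t + kappa 3 (Suc t)) / 2 + 3 / 2 * (kappa 2 t - kappa 2 (Suc t))"
proof -
  have "2 * kappa 3 (Suc (2 * t)) = kappa 3 t + kappa 3 (Suc t) + 3 * (kappa 2 t - kappa 2 (Suc t))"
    using arg_cong[OF moment_3_Suc_double, of Re] by (simp add: kappa_eq_moment)
  then show ?thesis
    by argo
qed

lemma D_Suc_double: "D (Suc (2 * t)) = (D t + D (Suc t)) / 2 + 1 - (kappa 2 t - kappa 2 (Suc t)) / 2"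
  unfolding D_def kappa_2_Suc_double kappa_3_Suc_double by (simp add: field_simps)

lemma kappa_2_0: "kappa 2 0 = 0"
  by (simp add: kappa_eq_moment moment_of_0)

lemma kappa_2_1: "kappa 2 1 = 2"
  using kappa_2_Suc_double[of 0] by (simp add: kappa_2_0)

lemma abs_kappa_2_Suc_diff_le: "\<bar>kappa 2 (Suc t) - kappa 2 t\<bar> \<le> 2"
proof (induction t rule: nat_bit_induct)
  case zero
  show ?case
    using kappa_2_1 by (simp add: kappa_2_0)
next
  case (even t)
  then show ?case
    using kappa_2_Suc_double[of t] unfolding kappa_double abs_le_iff by argo
next
  case (odd t)
  have "kappa 2 (Suc (Suc (2 * t))) = kappa 2 (Suc t)"
    using kappa_double[of 2 "Suc t"] by simp
  with odd show ?case
    using kappa_2_Suc_double[of t] unfolding abs_le_iff by argo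
qed

section \<open>The chain \<open>2 ^ i * (2 * t + 1) - 1\<close>\<close>

lemma Suc_eq_pow2_Suc_mult_odd:
  assumes "Suc x = 2 ^ Suc i * Suc (2 * t)"
  obtains y where "x = Suc (2 * y)" "Suc y = 2 ^ i * Suc (2 * t)"
proof
  show "Suc (2 ^ i * Suc (2 * t) - 1) = 2 ^ i * Suc (2 * t)"
    by simp
  with assms show "x = Suc (2 * (2 ^ i * Suc (2 * t) - 1))"
    by simp
qed

lemma kappa_2_pred_pow2_mult_odd:
  assumes "Suc x = 2 ^ i * Suc (2 * t)"
  shows "kappa 2 x = kappa 2 (Suc (2 * t)) + 2 + (kappa 2 t - kappa 2 (Suc (2 * t)) - 2) / 2 ^ i"
  using assms
proof (induction i arbitrary: x)
  case 0
  then show ?case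
    by (simp add: kappa_double)
next
  case (Suc i)
  from Suc.prems obtain y where y: "x = Suc (2 * y)" "Suc y = 2 ^ i * Suc (2 * t)"
    by (rule Suc_eq_pow2_Suc_mult_odd)
  have "kappa 2 (Suc y) = kappa 2 (Suc (2 * t))"
    unfolding y(2) by (rule kappa_pow2_mult)
  have "kappa 2 x = (kappa 2 y + kappa 2 (Suc y)) / 2 + 1"
    unfolding y(1) by (rule kappa_2_Suc_double)
  also have "\<dots> = kappa 2 (Suc (2 * t)) + 2 + (kappa 2 t - kappa 2 (Suc (2 * t)) - 2) / 2 ^ Suc i"
    unfolding Suc.IH[OF y(2)] \<open>kappa 2 (Suc y) = kappa 2 (Suc (2 * t))\<close> by (simp add: field_simps)
  finally show ?case .
qed

lemma D_pred_pow2_mult_odd: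
  assumes "Suc x = 2 ^ i * Suc (2 * t)"
  shows "D x = D (Suc (2 * t))
    + (D t - D (Suc (2 * t)) - real i * (kappa 2 t - kappa 2 (Suc (2 * t)) - 2)) / 2 ^ i"
  using assms
proof (induction i arbitrary: x)
  case 0
  then show ?case
    by (simp add: D_double)
next
  case (Suc i)
  from Suc.prems obtain y where y: "x = Suc (2 * y)" "Suc y = 2 ^ i * Suc (2 * t)"
    by (rule Suc_eq_pow2_Suc_mult_odd)
  have "D (Suc y) = D (Suc (2 * t))" "kappa 2 (Suc y) = kappa 2 (Suc (2 * t))"
    unfolding y(2) by (rule D_pow2_mult kappa_pow2_mult)+
  note Suc_y = this
  have "D x = (D y + D (Suc y)) / 2 + 1 - (kappa 2 y - kappa 2 (Suc y)) / 2"
    unfolding y(1) by (rule D_Suc_double)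
  also have "\<dots> = D (Suc (2 * t))
    + (D t - D (Suc (2 * t)) - real (Suc i) * (kappa 2 t - kappa 2 (Suc (2 * t)) - 2)) / 2 ^ Suc i"
    unfolding Suc.IH[OF y(2)] kappa_2_pred_pow2_mult_odd[OF y(2)] Suc_y by (simp add: field_simps)
  finally show ?case .
qed

lemma D_pred_pow2_mult_odd_ge:
  assumes "Suc x = 2 ^ i * Suc (2 * t)"
  shows "D x \<ge> m t + 2 * real i / 2 ^ i"
proof -
  define u :: real where "u = 1 / 2 ^ i"
  define s where "s = (kappa 2 t - kappa 2 (Suc t)) / 2"
  have u: "0 < u" "u \<le> 1"
    by (simp_all add: u_def)
  have s: "s \<le> 1"
    using abs_kappa_2_Suc_diff_le[of t] unfolding s_def abs_le_iff by argo
  have "D x = (1 - u) * ((D t + D (Suc t)) / 2 + 1 - s) + u * D t + real i * u * (3 - s)"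
    unfolding D_pred_pow2_mult_odd[OF assms] D_Suc_double kappa_2_Suc_double u_def s_def
    by (simp add: field_simps)
  then have "D x - (m t + 2 * real i * u) = (1 - u) * ((D t - m t) + (D (Suc t) - m t)) / 2
      + u * (D t - m t) + (1 - u) * (1 - s) + real i * u * (1 - s)"
    by (simp add: field_simps)
  moreover have "0 \<le> (1 - u) * ((D t - m t) + (D (Suc t) - m t))" "0 \<le> u * (D t - m t)"
    "0 \<le> (1 - u) * (1 - s)" "0 \<le> real i * u * (1 - s)"
    using u s by (simp_all add: m_def)
  moreover have "2 * real i / 2 ^ i = 2 * real i * u"
    by (simp add: u_def)
  ultimately show ?thesis
    by linarith
qed

theorem corollary2p12:
  fixes t k :: nat
  assumes "k \<ge> 1"
  shows "m (2 ^ (k + 2) * t + 2 ^ (k + 1) - 2) \<ge> m t + real k / 2 ^ k"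
proof -
  define x where "x = 2 ^ k * Suc (2 * t) - 1"
  have x: "Suc x = 2 ^ k * Suc (2 * t)"
    by (simp add: x_def)
  then have N: "2 ^ (k + 2) * t + 2 ^ (k + 1) = 2 * Suc x"
    and x': "Suc (Suc (2 * x)) = 2 ^ Suc k * Suc (2 * t)"
    by (simp_all add: power_add algebra_simps)
  have "m (2 ^ (k + 2) * t + 2 ^ (k + 1) - 2) = m (2 * x)"
    by (simp only: N) simp
  also have "\<dots> = min (D x) (D (Suc (2 * x)))"
    by (simp add: m_def D_double)
  finally have "m (2 ^ (k + 2) * t + 2 ^ (k + 1) - 2) = min (D x) (D (Suc (2 * x)))" .
  moreover have "real k / 2 ^ k \<le> 2 * real k / 2 ^ k" "real k / 2 ^ k \<le> 2 * real (Suc k) / 2 ^ Suc k"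
    by (simp_all add: field_simps)
  ultimately show ?thesis
    using D_pred_pow2_mult_odd_ge[OF x] D_pred_pow2_mult_odd_ge[OF x'] by linarith
qed

end
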